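(* Let $(X,d,A)$ be a metric pair and $p\in[1,\infty]$. If $(X,d)$ is compact, then $(D^n(X,A),W_p)$ is compact for every $n\in\mathbb{N}$.
   Context: A metric on $X$ is a map $d:X\times X\to[0,\infty]$ with $d(x,x)=0$, symmetry and the triangle inequality (infinite distances allowed, $d(x,y)=0$ need not imply $x=y$); a metric pair $(X,d,A)$ is such a space with a closed subset $A$. $D^n(X,A)$ is the set of formal sums $\sum_{i=1}^m x_i$ of points of $X\setminus A$ with $0\le m\le n$ (repetitions allowed). A matching of $\hat\alpha=\sum_{i\in I}x_i$, $\hat\beta=\sum_{j\in J}y_j$ is a formal sum $\sum_{k\in K}(x_k,y_{\varphi(k)})+\sum_{i\in I\setminus K}(x_i,z_i)+\sum_{j\in J\setminus\varphi(K)}(w_j,y_j)$ with $K\subset I$, $\varphi$ injective, $z_i,w_j\in A$; its $p$-cost is the $\ell^p$ norm (sup norm if $p=\infty$) of the distances of paired points; $W_p$ is the infimum of $p$-costs over matchings. *)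

theory Defs
  imports "HOL-Analysis.Analysis" "HOL-Library.Multiset"
begin

definition emetric :: "'a set \<Rightarrow> ('a \<Rightarrow> 'a \<Rightarrow> ennreal) \<Rightarrow> bool" where
  "emetric X d \<longleftrightarrow>
     (\<forall>x\<in>X. d x x = 0) \<and>
     (\<forall>x\<in>X. \<forall>y\<in>X. d x y = d y x) \<and>
     (\<forall>x\<in>X. \<forall>y\<in>X. \<forall>z\<in>X. d x z \<le> d x y + d y z)"

definition emetric_topology :: "'a set \<Rightarrow> ('a \<Rightarrow> 'a \<Rightarrow> ennreal) \<Rightarrow> 'a topology" where
  "emetric_topology X d = topology (\<lambda>U. U \<subseteq> X \<and>
     (\<forall>x\<in>U. \<exists>r>0. \<forall>y\<in>X. d x y < r \<longrightarrow> y \<in> U))"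

definition metric_pair :: "'a set \<Rightarrow> ('a \<Rightarrow> 'a \<Rightarrow> ennreal) \<Rightarrow> 'a set \<Rightarrow> bool" where
  "metric_pair X d A \<longleftrightarrow> emetric X d \<and> closedin (emetric_topology X d) A"

definition Dn :: "nat \<Rightarrow> 'a set \<Rightarrow> 'a set \<Rightarrow> 'a multiset set" where
  "Dn n X A = {\<alpha>. set_mset \<alpha> \<subseteq> X - A \<and> size \<alpha> \<le> n}"

text \<open>Matchings of alpha and beta: formal sums of pairs, split into pairs
  (x_k, y_phi(k)), pairs (x_i, z_i) with z_i in A, and pairs (w_j, y_j) with w_j in A.\<close>
definition is_matching :: "'a set \<Rightarrow> 'a multiset \<Rightarrow> 'a multiset \<Rightarrow> ('a \<times> 'a) multiset \<Rightarrow> bool" where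
  "is_matching A \<alpha> \<beta> m \<longleftrightarrow>
     (\<exists>m1 m2 m3. m = m1 + m2 + m3 \<and>
        image_mset fst m1 + image_mset fst m2 = \<alpha> \<and>
        image_mset snd m1 + image_mset snd m3 = \<beta> \<and>
        set_mset (image_mset snd m2) \<subseteq> A \<and>
        set_mset (image_mset fst m3) \<subseteq> A)"

definition epow :: "ennreal \<Rightarrow> real \<Rightarrow> ennreal" where
  "epow x q = (if x = top then top else ennreal (enn2real x powr q))"

definition pcost :: "('a \<Rightarrow> 'a \<Rightarrow> ennreal) \<Rightarrow> ennreal \<Rightarrow> ('a \<times> 'a) multiset \<Rightarrow> ennreal" where
  "pcost d p m =
     (if p = top then Sup (set_mset (image_mset (\<lambda>(x,y). d x y) m))
      else epow (sum_mset (image_mset (\<lambda>(x,y). epow (d x y) (enn2real p)) m)) (1 / enn2real p))"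

definition Wp :: "('a \<Rightarrow> 'a \<Rightarrow> ennreal) \<Rightarrow> 'a set \<Rightarrow> ennreal \<Rightarrow> 'a multiset \<Rightarrow> 'a multiset \<Rightarrow> ennreal" where
  "Wp d A p \<alpha> \<beta> = Inf {pcost d p m | m. is_matching A \<alpha> \<beta> m}"

end

theory Submission imports Defs begin

text \<open>Forgetting the coordinates that lie in A maps X^k onto the formal sums with at most k points.
  Pairing the i-th coordinates of two tuples, and discarding the pairs lying entirely in A, is a
  matching between their images, so this map is k-Lipschitz from the sup distance on X^k to W_p.
  Hence D^n(X,A) is a finite union of continuous images of the compact spaces X^k, k \<le> n.\<close>

lemma istopology_emetric:
  fixes d :: "'a \<Rightarrow> 'a \<Rightarrow> ennreal"
  shows "istopology (\<lambda>U. U \<subseteq> X \<and> (\<forall>x\<in>U. \<exists>r>0. \<forall>y\<in>X. d x y < r \<longrightarrow> y \<in> U))"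
    (is "istopology ?open")
  unfolding istopology_def
proof (rule conjI; intro allI impI)
  fix S T assume S: "?open S" and T: "?open T"
  have "\<exists>r>0. \<forall>y\<in>X. d x y < r \<longrightarrow> y \<in> S \<inter> T" if x: "x \<in> S \<inter> T" for x
  proof -
    from S x obtain r where "r > 0" "\<forall>y\<in>X. d x y < r \<longrightarrow> y \<in> S"
      by auto
    moreover from T x obtain s where "s > 0" "\<forall>y\<in>X. d x y < s \<longrightarrow> y \<in> T"
      by auto
    ultimately show ?thesis
      by (intro exI[of _ "min r s"]) auto
  qed
  then show "?open (S \<inter> T)"
    using S by blast
next
  fix K assume "\<forall>U\<in>K. ?open U"
  then show "?open (\<Union>K)" by (meson UnionE UnionI Union_least)
qed

lemma openin_emetric_topology:
  "openin (emetric_topology X d) U \<longleftrightarrow> U \<subseteq> X \<and> (\<forall>x\<in>U. \<exists>r>0. \<forall>y\<in>X. d x y < r \<longrightarrow> y \<in> U)"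
  unfolding emetric_topology_def using istopology_emetric[of X d] by (simp add: topology_inverse')

lemma topspace_emetric_topology [simp]: "topspace (emetric_topology X d) = X"
proof (rule subset_antisym)
  show "topspace (emetric_topology X d) \<subseteq> X"
    using openin_topspace openin_emetric_topology by metis
  have "openin (emetric_topology X d) X"
    unfolding openin_emetric_topology using zero_less_one by blast
  then show "X \<subseteq> topspace (emetric_topology X d)"
    by (rule openin_subset)
qed

lemma openin_emetric_ball:
  assumes "emetric X d" and "c \<in> X"
  shows "openin (emetric_topology X d) {z\<in>X. d c z < ennreal e}"
  unfolding openin_emetric_topology
proof (intro conjI ballI)
  fix z assume z: "z \<in> {z\<in>X. d c z < ennreal e}"
  then have "d c z < top"
    using ennreal_less_top less_trans by blast
  show "\<exists>r>0. \<forall>y\<in>X. d z y < r \<longrightarrow> y \<in> {z\<in>X. d c z < ennreal e}"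
  proof (intro exI[of _ "ennreal e - d c z"] conjI ballI impI)
    show "ennreal e - d c z > 0" using z by (simp add: diff_gr0_ennreal)
    fix y assume y: "y \<in> X" "d z y < ennreal e - d c z"
    have "d c y \<le> d c z + d z y"
      using assms z y unfolding emetric_def by blast
    also have "\<dots> < d c z + (ennreal e - d c z)"
      using y(2) \<open>d c z < top\<close> by (simp add: ennreal_add_left_cancel_less)
    also have "\<dots> = ennreal e"
      using z by (simp add: add_diff_inverse_ennreal less_imp_le)
    finally show "y \<in> {z\<in>X. d c z < ennreal e}" using y by simp
  qed
qed auto

lemma continuous_map_into_emetric_topology:
  assumes "f \<in> topspace T \<rightarrow> Y"
    and "\<And>x \<epsilon>. x \<in> topspace T \<Longrightarrow> \<epsilon> > 0 \<Longrightarrow>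
           \<exists>V. openin T V \<and> x \<in> V \<and> (\<forall>y\<in>V. e (f x) (f y) < ennreal \<epsilon>)"
  shows "continuous_map T (emetric_topology Y e) f"
  unfolding continuous_map_def
proof (intro conjI allI impI)
  show "f \<in> topspace T \<rightarrow> topspace (emetric_topology Y e)"
    using assms(1) by simp
  fix U assume "openin (emetric_topology Y e) U"
  then have U: "\<forall>u\<in>U. \<exists>r>0. \<forall>v\<in>Y. e u v < r \<longrightarrow> v \<in> U"
    by (simp add: openin_emetric_topology)
  show "openin T {x \<in> topspace T. f x \<in> U}"
  proof (subst openin_subopen, intro ballI)
    fix x assume x: "x \<in> {x \<in> topspace T. f x \<in> U}"
    then obtain r where r: "r > 0" "\<forall>v\<in>Y. e (f x) v < r \<longrightarrow> v \<in> U"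
      using U by blast
    obtain \<epsilon> where "\<epsilon> > 0" "ennreal \<epsilon> < r"
      using \<open>r > 0\<close> by (metis dense ennreal_0 ennreal_cases order_less_asym order_less_le)
    then obtain V where V: "openin T V" "x \<in> V" "\<forall>y\<in>V. e (f x) (f y) < ennreal \<epsilon>"
      using assms(2) x by blast
    have "V \<subseteq> {x \<in> topspace T. f x \<in> U}"
    proof
      fix y assume "y \<in> V"
      then have "y \<in> topspace T"
        using V(1) openin_subset by blast
      moreover have "e (f x) (f y) < r"
        using V(3) \<open>y \<in> V\<close> \<open>ennreal \<epsilon> < r\<close> less_trans by blast
      ultimately show "y \<in> {x \<in> topspace T. f x \<in> U}"
        using r(2) assms(1) by blast
    qed
    with V show "\<exists>V. openin T V \<and> x \<in> V \<and> V \<subseteq> {x \<in> topspace T. f x \<in> U}"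
      by blast
  qed
qed

lemma epow_ennreal: "0 \<le> x \<Longrightarrow> epow (ennreal x) q = ennreal (x powr q)"
  by (simp add: epow_def)

lemma epow_mono:
  assumes "x \<le> y" and "0 \<le> q"
  shows "epow x q \<le> epow y q"
proof (cases "y = top")
  case False
  then have "x \<noteq> top"
    using assms(1) top.extremum_unique by blast
  with \<open>y \<noteq> top\<close> obtain a b where "x = ennreal a" "y = ennreal b" "0 \<le> a" "0 \<le> b"
    by (metis ennreal_cases)
  with assms(1) have "a \<le> b"
    by simp
  with \<open>x = ennreal a\<close> \<open>y = ennreal b\<close> \<open>0 \<le> a\<close> show ?thesis
    using assms(2) by (simp add: epow_ennreal ennreal_leI powr_mono2)
qed (simp add: epow_def)

lemma real_powr_inverse_le_self:
  assumes "1 \<le> q"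
  shows "real N powr (1 / q) \<le> real N"
proof (cases "N = 0")
  case False
  then have "real N powr (1 / q) \<le> real N powr 1"
    using assms by (intro powr_mono) auto
  then show ?thesis by simp
qed simp

lemma pcost_le_size_mult:
  assumes "1 \<le> p" and "0 \<le> \<delta>" and close: "\<And>x y. (x, y) \<in># m \<Longrightarrow> d x y \<le> ennreal \<delta>"
  shows "pcost d p m \<le> ennreal (real (size m) * \<delta>)"
proof (cases "p = top")
  case True
  have "d x y \<le> ennreal (real (size m) * \<delta>)" if "(x, y) \<in># m" for x y
  proof -
    have "1 \<le> size m"
      using that by (cases m) auto
    then have "\<delta> \<le> real (size m) * \<delta>"
      using assms(2) by (simp add: mult_le_cancel_right1)
    then show ?thesis
      using close[OF that] order_trans ennreal_leI by blast
  qed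
  then show ?thesis
    using True by (auto simp: pcost_def intro!: Sup_least)
next
  case False
  define q where "q = enn2real p"
  have "1 \<le> q"
    using assms(1) False unfolding q_def by (metis enn2real_1 enn2real_mono top.not_eq_extremum)
  have "(\<Sum>(x, y)\<in>#m. epow (d x y) q) \<le> (\<Sum>_\<in>#m. ennreal (\<delta> powr q))"
    using close \<open>1 \<le> q\<close> assms(2) epow_mono[of _ "ennreal \<delta>" q]
    by (intro sum_mset_mono) (auto simp: epow_ennreal)
  also have "\<dots> = ennreal (real (size m) * \<delta> powr q)"
    by (simp add: ennreal_mult'' ennreal_of_nat_eq_real_of_nat)
  finally have "pcost d p m \<le> epow (ennreal (real (size m) * \<delta> powr q)) (1 / q)"
    using False \<open>1 \<le> q\<close> by (simp add: pcost_def q_def epow_mono)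
  also have "\<dots> = ennreal (real (size m) powr (1 / q) * \<delta>)"
    using \<open>1 \<le> q\<close> assms(2) by (simp add: epow_ennreal powr_mult powr_powr)
  also have "\<dots> \<le> ennreal (real (size m) * \<delta>)"
    using \<open>1 \<le> q\<close> assms(2) by (intro ennreal_leI mult_right_mono real_powr_inverse_le_self)
  finally show ?thesis .
qed

lemma is_matching_filter_pairs:
  "is_matching A {#a \<in># image_mset fst M. a \<notin> A#} {#b \<in># image_mset snd M. b \<notin> A#}
     {#ab \<in># M. fst ab \<notin> A \<or> snd ab \<notin> A#}"
  unfolding is_matching_def
proof (intro exI conjI)
  show "{#ab \<in># M. fst ab \<notin> A \<or> snd ab \<notin> A#} =
      {#ab \<in># M. fst ab \<notin> A \<and> snd ab \<notin> A#} + {#ab \<in># M. fst ab \<notin> A \<and> snd ab \<in> A#}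
        + {#ab \<in># M. fst ab \<in> A \<and> snd ab \<notin> A#}"
    by (induction M) auto
  show "image_mset fst {#ab \<in># M. fst ab \<notin> A \<and> snd ab \<notin> A#}
      + image_mset fst {#ab \<in># M. fst ab \<notin> A \<and> snd ab \<in> A#} = {#a \<in># image_mset fst M. a \<notin> A#}"
    by (induction M) auto
  show "image_mset snd {#ab \<in># M. fst ab \<notin> A \<and> snd ab \<notin> A#}
      + image_mset snd {#ab \<in># M. fst ab \<in> A \<and> snd ab \<notin> A#} = {#b \<in># image_mset snd M. b \<notin> A#}"
    by (induction M) auto
qed auto

definition sum_outside :: "'a set \<Rightarrow> nat \<Rightarrow> (nat \<Rightarrow> 'a) \<Rightarrow> 'a multiset" where
  "sum_outside A k x = {#a \<in># image_mset x (mset_set {..<k}). a \<notin> A#}"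

lemma sum_outside_in_Dn:
  assumes "x \<in> {..<k} \<rightarrow> X" and "k \<le> n"
  shows "sum_outside A k x \<in> Dn n X A"
proof -
  have "size (sum_outside A k x) \<le> k"
    unfolding sum_outside_def by (metis card_lessThan size_filter_mset_lesseq size_image_mset size_mset_set)
  then show ?thesis
    using assms unfolding Dn_def sum_outside_def by auto
qed

lemma Dn_eq_UN_sum_outside:
  "Dn n X A = (\<Union>k\<le>n. sum_outside A k ` PiE {..<k} (\<lambda>_. X))"
proof
  show "(\<Union>k\<le>n. sum_outside A k ` PiE {..<k} (\<lambda>_. X)) \<subseteq> Dn n X A"
    by (auto intro!: sum_outside_in_Dn simp: PiE_def)
  show "Dn n X A \<subseteq> (\<Union>k\<le>n. sum_outside A k ` PiE {..<k} (\<lambda>_. X))"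
  proof
    fix \<alpha> assume \<alpha>: "\<alpha> \<in> Dn n X A"
    obtain xs where xs: "mset xs = \<alpha>"
      using ex_mset by blast
    define k where "k = length xs"
    have "set xs \<subseteq> X - A" "k \<le> n"
      using \<alpha> xs unfolding Dn_def k_def by auto
    then have "restrict (nth xs) {..<k} \<in> PiE {..<k} (\<lambda>_. X)"
      unfolding k_def by (auto dest!: nth_mem)
    moreover have "sum_outside A k (restrict (nth xs) {..<k}) = \<alpha>"
    proof -
      have "image_mset (restrict (nth xs) {..<k}) (mset_set {..<k}) = image_mset (nth xs) (mset_set {..<k})"
        by (intro image_mset_cong) auto
      also have "\<dots> = mset (map (nth xs) [0..<k])"
        by (simp add: mset_upt[symmetric] atLeast0LessThan)
      also have "\<dots> = \<alpha>"
        using xs unfolding k_def by (simp add: map_nth)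
      finally have "image_mset (restrict (nth xs) {..<k}) (mset_set {..<k}) = \<alpha>" .
      moreover have "\<forall>a\<in>#\<alpha>. a \<notin> A"
        using \<open>set xs \<subseteq> X - A\<close> xs by auto
      ultimately show ?thesis
        unfolding sum_outside_def by (simp add: filter_mset_eq_conv)
    qed
    ultimately show "\<alpha> \<in> (\<Union>k\<le>n. sum_outside A k ` PiE {..<k} (\<lambda>_. X))"
      using \<open>k \<le> n\<close> by blast
  qed
qed

lemma Wp_sum_outside_le:
  assumes "1 \<le> p" and "0 \<le> \<delta>" and "\<And>i. i < k \<Longrightarrow> d (x i) (y i) \<le> ennreal \<delta>"
  shows "Wp d A p (sum_outside A k x) (sum_outside A k y) \<le> ennreal (real k * \<delta>)"
proof -
  define M where "M = image_mset (\<lambda>i. (x i, y i)) (mset_set {..<k})"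
  define m where "m = {#ab \<in># M. fst ab \<notin> A \<or> snd ab \<notin> A#}"
  have "is_matching A (sum_outside A k x) (sum_outside A k y) m"
    using is_matching_filter_pairs[of A M]
    unfolding m_def M_def sum_outside_def by (simp add: multiset.map_comp comp_def)
  then have "Wp d A p (sum_outside A k x) (sum_outside A k y) \<le> pcost d p m"
    unfolding Wp_def by (blast intro: Inf_lower)
  also have "\<dots> \<le> ennreal (real (size m) * \<delta>)"
    using assms by (intro pcost_le_size_mult) (auto simp: m_def M_def)
  also have "\<dots> \<le> ennreal (real k * \<delta>)"
    using assms(2) size_filter_mset_lesseq[of _ M]
    by (intro ennreal_leI mult_right_mono) (auto simp: m_def M_def)
  finally show ?thesis .
qed

lemma continuous_map_sum_outside:
  assumes "emetric X d" and "1 \<le> p" and "k \<le> n"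
  shows "continuous_map (product_topology (\<lambda>_. emetric_topology X d) {..<k})
           (emetric_topology (Dn n X A) (Wp d A p)) (sum_outside A k)"
proof (rule continuous_map_into_emetric_topology)
  show "sum_outside A k \<in> topspace (product_topology (\<lambda>_. emetric_topology X d) {..<k}) \<rightarrow> Dn n X A"
    using assms(3) by (auto intro!: sum_outside_in_Dn simp: PiE_def)
next
  fix x and \<epsilon> :: real
  assume x: "x \<in> topspace (product_topology (\<lambda>_. emetric_topology X d) {..<k})" and "\<epsilon> > 0"
  define \<delta> where "\<delta> = \<epsilon> / (k + 1)"
  have "\<delta> > 0" and "real k * \<delta> < \<epsilon>"
    using \<open>\<epsilon> > 0\<close> by (auto simp: \<delta>_def field_simps)
  define V where "V = PiE {..<k} (\<lambda>i. {z\<in>X. d (x i) z < ennreal \<delta>})"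
  show "\<exists>V. openin (product_topology (\<lambda>_. emetric_topology X d) {..<k}) V \<and> x \<in> V \<and>
          (\<forall>y\<in>V. Wp d A p (sum_outside A k x) (sum_outside A k y) < ennreal \<epsilon>)"
  proof (intro exI[of _ V] conjI ballI)
    show "openin (product_topology (\<lambda>_. emetric_topology X d) {..<k}) V"
      unfolding V_def openin_PiE_gen using x assms(1) by (auto intro!: openin_emetric_ball)
    show "x \<in> V"
      using x assms(1) \<open>\<delta> > 0\<close> unfolding V_def emetric_def by (auto simp: PiE_iff)
    fix y assume "y \<in> V"
    then have "Wp d A p (sum_outside A k x) (sum_outside A k y) \<le> ennreal (real k * \<delta>)"
      using assms(2) \<open>\<delta> > 0\<close> unfolding V_def
      by (intro Wp_sum_outside_le) (auto intro: less_imp_le)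
    also have "\<dots> < ennreal \<epsilon>"
      using \<open>real k * \<delta> < \<epsilon>\<close> \<open>\<epsilon> > 0\<close> by (intro ennreal_lessI)
    finally show "Wp d A p (sum_outside A k x) (sum_outside A k y) < ennreal \<epsilon>" .
  qed
qed

theorem proposition7p8:
  fixes X A :: "'a set" and d :: "'a \<Rightarrow> 'a \<Rightarrow> ennreal" and p :: ennreal and n :: nat
  assumes "metric_pair X d A"
    and "1 \<le> p"
    and "compact_space (emetric_topology X d)"
  shows "compact_space (emetric_topology (Dn n X A) (Wp d A p))"
proof -
  have "emetric X d"
    using assms(1) unfolding metric_pair_def by blast
  have "compactin (emetric_topology (Dn n X A) (Wp d A p)) (sum_outside A k ` PiE {..<k} (\<lambda>_. X))"
    if "k \<le> n" for k
  proof -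
    have "compact_space (product_topology (\<lambda>_. emetric_topology X d) {..<k})"
      using assms(3) by (simp add: compact_space_product_topology)
    then show ?thesis
      using image_compactin continuous_map_sum_outside[OF \<open>emetric X d\<close> assms(2) that]
      unfolding compact_space_def by fastforce
  qed
  then have "compactin (emetric_topology (Dn n X A) (Wp d A p)) (Dn n X A)"
    unfolding Dn_eq_UN_sum_outside[of n X A] by (intro compactin_Union) auto
  then show ?thesis
    unfolding compact_space_def by simp
qed

end
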